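(* Let $F\colon\mathsf{Set}\to\mathsf{Set}$ be a functor and $\Lambda^F$ a set of evaluation functions $F\mathcal{V}\to\mathcal{V}$. Define, for $d_X\colon X\times X\to\mathcal{V}$ and $s,t\in FX$, \[\overline{F}(d_X)(s,t)=\bigwedge_{\mathit{ev}\in\Lambda^F}\ \bigwedge_{f\in\gamma_X(d_X)} d_\mathcal{V}(\mathit{ev}(Ff(s)),\mathit{ev}(Ff(t))).\] Then $\overline{F}$ (acting as $F$ on maps) is a functor on the category $\mathcal{V}\text{-}\mathsf{Graph}$, i.e. whenever $f\colon X\to Y$ satisfies $d_X\sqsubseteq d_Y\circ(f\times f)$ then $\overline{F}(d_X)\sqsubseteq\overline{F}(d_Y)\circ(Ff\times Ff)$. Moreover, restricted to $\mathcal{V}$-categories it is fibred: $\overline{F}(d_Y\circ(f\times f))=\overline{F}(d_Y)\circ(Ff\times Ff)$ for every function $f\colon X\to Y$ and every $\mathcal{V}$-category $d_Y$ on $Y$.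
   Context: $\mathcal{V}$ is a quantale: a complete lattice $(\mathcal{V},\sqsubseteq)$ with a commutative monoid structure $(\mathcal{V},\otimes,k)$ such that $\otimes$ preserves arbitrary joins in each argument; $d_\mathcal{V}(a,-)$ denotes the right adjoint of $a\otimes -$ (residuation). Write $\bigwedge$ for meets in the order $\sqsubseteq$. $\mathcal{V}\text{-}\mathsf{Graph}$ has objects pairs $(X,d_X)$ with $d_X\colon X\times X\to\mathcal{V}$ and morphisms non-expansive maps $f$ ($d_X\sqsubseteq d_Y\circ(f\times f)$). A $\mathcal{V}$-category is such a $d$ with $k\sqsubseteq d(x,x)$ and $d(x,y)\otimes d(y,z)\sqsubseteq d(x,z)$. $\gamma_X(d_X)=\{f\colon X\to\mathcal{V}\mid d_X(x_1,x_2)\sqsubseteq d_\mathcal{V}(f(x_1),f(x_2))\text{ for all }x_1,x_2\}$. $\overline{F}$ is the (coalgebraic) Kantorovich lifting of $F$ w.r.t. $\Lambda^F$. *)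

theory Defs
  imports Main
begin

text \<open>A quantale structure on a complete lattice: a commutative monoid (tensor, k)
  whose tensor preserves arbitrary joins in each argument (by commutativity it
  suffices to require it in the second argument).\<close>
definition quantale :: "('v::complete_lattice \<Rightarrow> 'v \<Rightarrow> 'v) \<Rightarrow> 'v \<Rightarrow> bool" where
  "quantale tensor k \<longleftrightarrow>
     (\<forall>a b c. tensor (tensor a b) c = tensor a (tensor b c)) \<and>
     (\<forall>a b. tensor a b = tensor b a) \<and>
     (\<forall>a. tensor k a = a) \<and>
     (\<forall>a B. tensor a (Sup B) = Sup (tensor a ` B))"

definition dV :: "('v::complete_lattice \<Rightarrow> 'v \<Rightarrow> 'v) \<Rightarrow> 'v \<Rightarrow> 'v \<Rightarrow> 'v" where
  "dV tensor a b = Sup {c. tensor a c \<le> b}"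

definition nonexp :: "('x \<Rightarrow> 'x \<Rightarrow> 'v::complete_lattice) \<Rightarrow> ('y \<Rightarrow> 'y \<Rightarrow> 'v) \<Rightarrow> ('x \<Rightarrow> 'y) \<Rightarrow> bool" where
  "nonexp dX dY f \<longleftrightarrow> (\<forall>x1 x2. dX x1 x2 \<le> dY (f x1) (f x2))"

definition vcat :: "('v::complete_lattice \<Rightarrow> 'v \<Rightarrow> 'v) \<Rightarrow> 'v \<Rightarrow> ('x \<Rightarrow> 'x \<Rightarrow> 'v) \<Rightarrow> bool" where
  "vcat tensor k d \<longleftrightarrow> (\<forall>x. k \<le> d x x) \<and> (\<forall>x y z. tensor (d x y) (d y z) \<le> d x z)"

definition gammaV :: "('v::complete_lattice \<Rightarrow> 'v \<Rightarrow> 'v) \<Rightarrow> ('x \<Rightarrow> 'x \<Rightarrow> 'v) \<Rightarrow> ('x \<Rightarrow> 'v) set" where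
  "gammaV tensor d = {f. \<forall>x1 x2. d x1 x2 \<le> dV tensor (f x1) (f x2)}"

text \<open>Kantorovich lifting; Fm is the action of the functor F on maps X -> V,
  Lam the set of evaluation functions F V -> V.\<close>
definition kantorovich ::
  "('v::complete_lattice \<Rightarrow> 'v \<Rightarrow> 'v) \<Rightarrow> (('x \<Rightarrow> 'v) \<Rightarrow> 'fx \<Rightarrow> 'fv) \<Rightarrow> ('fv \<Rightarrow> 'v) set
    \<Rightarrow> ('x \<Rightarrow> 'x \<Rightarrow> 'v) \<Rightarrow> 'fx \<Rightarrow> 'fx \<Rightarrow> 'v" where
  "kantorovich tensor Fm Lam d s t =
     (INF ev\<in>Lam. INF f\<in>gammaV tensor d. dV tensor (ev (Fm f s)) (ev (Fm f t)))"

end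

theory Submission
  imports Defs
begin

text \<open>Precomposition with a non-expansive \<open>f\<close> maps \<open>\<gamma>\<^sub>Y(d\<^sub>Y)\<close> into \<open>\<gamma>\<^sub>X(d\<^sub>X)\<close>, and
  functoriality of \<open>F\<close> turns the Kantorovich infimum for \<open>d\<^sub>Y\<close> at \<open>(Ff s, Ff t)\<close> into an
  infimum over these precomposed test functions; this gives non-expansiveness of \<open>Ff\<close>.
  If \<open>d\<^sub>Y\<close> is a \<open>\<V>\<close>-category, every \<open>g \<in> \<gamma>\<^sub>X(d\<^sub>Y \<circ> (f \<times> f))\<close> is of this form: it extends
  along \<open>f\<close> to its left Kan extension \<open>h y = \<Squnion>\<^sub>x g x \<otimes> d\<^sub>Y (f x) y\<close>, which lies in
  \<open>\<gamma>\<^sub>Y(d\<^sub>Y)\<close> by transitivity and restricts to \<open>g\<close> by reflexivity. Hence both infima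
  range over the same functions and the lifting is fibred.\<close>

lemma quantale_tensor_SUP:
  assumes "quantale tensor k"
  shows "tensor a (SUP x\<in>A. g x) = (SUP x\<in>A. tensor a (g x :: 'v::complete_lattice))"
  using assms unfolding quantale_def by (simp add: image_image)

lemma quantale_tensor_mono:
  assumes "quantale tensor k" and "a \<le> b"
  shows "tensor c a \<le> tensor c (b :: 'v::complete_lattice)"
proof -
  have "tensor c b = tensor c (Sup {a, b})"
    using \<open>a \<le> b\<close> by (simp add: sup_absorb2)
  also have "\<dots> = Sup (tensor c ` {a, b})"
    using assms(1) unfolding quantale_def by blast
  also have "\<dots> = sup (tensor c a) (tensor c b)"
    by simp
  finally show ?thesis
    by (metis sup.cobounded1)
qed

lemma quantale_residuation:
  assumes "quantale tensor k"
  shows "tensor a c \<le> b \<longleftrightarrow> c \<le> dV tensor a (b :: 'v::complete_lattice)"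
proof
  assume "tensor a c \<le> b"
  then show "c \<le> dV tensor a b"
    unfolding dV_def by (simp add: Sup_upper)
next
  assume "c \<le> dV tensor a b"
  then have "tensor a c \<le> tensor a (Sup {c. tensor a c \<le> b})"
    unfolding dV_def by (rule quantale_tensor_mono[OF assms])
  also have "\<dots> = Sup (tensor a ` {c. tensor a c \<le> b})"
    using assms unfolding quantale_def by blast
  also have "\<dots> \<le> b"
    by (auto intro: Sup_least)
  finally show "tensor a c \<le> b" .
qed

lemma gammaV_iff:
  assumes "quantale tensor k"
  shows "g \<in> gammaV tensor d \<longleftrightarrow> (\<forall>x1 x2. tensor (g x1) (d x1 x2) \<le> (g x2 :: 'v::complete_lattice))"
  unfolding gammaV_def using quantale_residuation[OF assms] by blast

lemma comp_in_gammaV: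
  assumes "nonexp dX dY f" and "h \<in> gammaV tensor dY"
  shows "h \<circ> f \<in> gammaV tensor dX"
  unfolding gammaV_def
proof (intro CollectI allI)
  fix x1 x2
  have "dX x1 x2 \<le> dY (f x1) (f x2)"
    using assms(1) unfolding nonexp_def by blast
  also have "\<dots> \<le> dV tensor (h (f x1)) (h (f x2))"
    using assms(2) unfolding gammaV_def by blast
  finally show "dX x1 x2 \<le> dV tensor ((h \<circ> f) x1) ((h \<circ> f) x2)"
    by simp
qed

definition left_kan :: "('v::complete_lattice \<Rightarrow> 'v \<Rightarrow> 'v) \<Rightarrow> ('y \<Rightarrow> 'y \<Rightarrow> 'v) \<Rightarrow> ('x \<Rightarrow> 'y)
    \<Rightarrow> ('x \<Rightarrow> 'v) \<Rightarrow> 'y \<Rightarrow> 'v" where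
  "left_kan tensor dY f g y = (SUP x. tensor (g x) (dY (f x) y))"

lemma left_kan_comp:
  assumes Q: "quantale tensor k" and refl: "\<And>y. k \<le> dY y y"
    and g: "g \<in> gammaV tensor (\<lambda>x1 x2. dY (f x1) (f x2))"
  shows "left_kan tensor dY f g \<circ> f = g"
proof
  fix x
  have "left_kan tensor dY f g (f x) \<le> g x"
    using g unfolding left_kan_def gammaV_iff[OF Q] by (auto intro: SUP_least)
  moreover have "g x \<le> left_kan tensor dY f g (f x)"
  proof -
    have "g x = tensor (g x) k"
      using Q unfolding quantale_def by metis
    also have "\<dots> \<le> tensor (g x) (dY (f x) (f x))"
      by (rule quantale_tensor_mono[OF Q refl])
    also have "\<dots> \<le> left_kan tensor dY f g (f x)"
      unfolding left_kan_def by (rule SUP_upper) simp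
    finally show ?thesis .
  qed
  ultimately show "(left_kan tensor dY f g \<circ> f) x = g x"
    by simp
qed

lemma left_kan_in_gammaV:
  assumes Q: "quantale tensor k"
    and trans: "\<And>x y z. tensor (dY x y) (dY y z) \<le> dY x z"
  shows "left_kan tensor dY f g \<in> gammaV tensor dY"
  unfolding gammaV_iff[OF Q]
proof (intro allI)
  fix y1 y2
  have comm: "\<And>a b. tensor a b = tensor b a" and assoc: "\<And>a b c. tensor (tensor a b) c = tensor a (tensor b c)"
    using Q unfolding quantale_def by blast+
  have "tensor (left_kan tensor dY f g y1) (dY y1 y2)
      = (SUP x. tensor (g x) (tensor (dY (f x) y1) (dY y1 y2)))"
    unfolding left_kan_def comm[of _ "dY y1 y2"] quantale_tensor_SUP[OF Q]
    by (metis comm assoc)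
  also have "\<dots> \<le> (SUP x. tensor (g x) (dY (f x) y2))"
    by (intro SUP_mono' quantale_tensor_mono[OF Q trans])
  finally show "tensor (left_kan tensor dY f g y1) (dY y1 y2) \<le> left_kan tensor dY f g y2"
    unfolding left_kan_def .
qed

lemma gammaV_pullback:
  assumes Q: "quantale tensor k" and "vcat tensor k dY"
  shows "gammaV tensor (\<lambda>x1 x2. dY (f x1) (f x2)) = (\<lambda>h. h \<circ> f) ` gammaV tensor dY"
proof
  have "nonexp (\<lambda>x1 x2. dY (f x1) (f x2)) dY f"
    unfolding nonexp_def by simp
  then show "(\<lambda>h. h \<circ> f) ` gammaV tensor dY \<subseteq> gammaV tensor (\<lambda>x1 x2. dY (f x1) (f x2))"
    using comp_in_gammaV by blast
  show "gammaV tensor (\<lambda>x1 x2. dY (f x1) (f x2)) \<subseteq> (\<lambda>h. h \<circ> f) ` gammaV tensor dY"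
  proof
    fix g assume "g \<in> gammaV tensor (\<lambda>x1 x2. dY (f x1) (f x2))"
    with assms have "left_kan tensor dY f g \<circ> f = g" "left_kan tensor dY f g \<in> gammaV tensor dY"
      unfolding vcat_def by (blast intro: left_kan_comp left_kan_in_gammaV)+
    then show "g \<in> (\<lambda>h. h \<circ> f) ` gammaV tensor dY"
      by (metis image_eqI)
  qed
qed

lemma kantorovich_reindex:
  assumes F_comp: "\<And>h. FXV (h \<circ> f) = FYV h \<circ> FXY f"
  shows "kantorovich tensor FYV Lam dY (FXY f s) (FXY f t)
       = (INF ev\<in>Lam. INF g\<in>(\<lambda>h. h \<circ> f) ` gammaV tensor dY. dV tensor (ev (FXV g s)) (ev (FXV g t)))"
  unfolding kantorovich_def by (simp add: image_image F_comp)

lemma kantorovich_nonexp: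
  assumes F_comp: "\<And>h. FXV (h \<circ> f) = FYV h \<circ> FXY f" and "nonexp dX dY f"
  shows "nonexp (kantorovich tensor FXV Lam dX) (kantorovich tensor FYV Lam dY) (FXY f)"
  unfolding nonexp_def kantorovich_reindex[where FXV = FXV and FYV = FYV and FXY = FXY, OF F_comp]
proof (intro allI)
  fix s t
  have "(\<lambda>h. h \<circ> f) ` gammaV tensor dY \<subseteq> gammaV tensor dX"
    using comp_in_gammaV[OF \<open>nonexp dX dY f\<close>] by blast
  then show "kantorovich tensor FXV Lam dX s t
      \<le> (INF ev\<in>Lam. INF g\<in>(\<lambda>h. h \<circ> f) ` gammaV tensor dY. dV tensor (ev (FXV g s)) (ev (FXV g t)))"
    unfolding kantorovich_def by (intro INF_mono' INF_superset_mono) auto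
qed

lemma kantorovich_pullback:
  assumes "quantale tensor k" and F_comp: "\<And>h. FXV (h \<circ> f) = FYV h \<circ> FXY f"
    and "vcat tensor k dY"
  shows "kantorovich tensor FXV Lam (\<lambda>x1 x2. dY (f x1) (f x2))
       = (\<lambda>s t. kantorovich tensor FYV Lam dY (FXY f s) (FXY f t))"
  unfolding kantorovich_reindex[where FXV = FXV and FYV = FYV and FXY = FXY, OF F_comp] gammaV_pullback[OF assms(1,3), symmetric]
  by (simp add: kantorovich_def fun_eq_iff)

theorem mainTheorem10:
  fixes tensor :: "'v::complete_lattice \<Rightarrow> 'v \<Rightarrow> 'v" and k :: 'v
    and FXY :: "('x \<Rightarrow> 'y) \<Rightarrow> 'fx \<Rightarrow> 'fy"
    and FXV :: "('x \<Rightarrow> 'v) \<Rightarrow> 'fx \<Rightarrow> 'fv"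
    and FYV :: "('y \<Rightarrow> 'v) \<Rightarrow> 'fy \<Rightarrow> 'fv"
    and Lam :: "('fv \<Rightarrow> 'v) set"
  assumes "quantale tensor k"
    and F_comp: "\<And>(f :: 'x \<Rightarrow> 'y) (h :: 'y \<Rightarrow> 'v). FXV (h \<circ> f) = FYV h \<circ> FXY f"
  shows "(\<forall>(f :: 'x \<Rightarrow> 'y) dX dY. nonexp dX dY f \<longrightarrow>
            nonexp (kantorovich tensor FXV Lam dX) (kantorovich tensor FYV Lam dY) (FXY f))
       \<and> (\<forall>(f :: 'x \<Rightarrow> 'y) (dY :: 'y \<Rightarrow> 'y \<Rightarrow> 'v). vcat tensor k dY \<longrightarrow>
            kantorovich tensor FXV Lam (\<lambda>x1 x2. dY (f x1) (f x2))
              = (\<lambda>s t. kantorovich tensor FYV Lam dY (FXY f s) (FXY f t)))"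
  by (blast intro: kantorovich_nonexp kantorovich_pullback[OF assms(1)] F_comp)

end
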